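(* Let $d,h\ge1$, $1/2<\alpha\le1$, and let $\mathbf{x}:[0,1]\to\mathbb{R}^h$ satisfy $|\mathbf{x}(t)-\mathbf{x}(s)|\le C_\alpha|t-s|^\alpha$ for some $C_\alpha\in(0,\infty)$. Let $\mathbf{f}=[f_{ij}]:\mathbb{R}^d\to\mathbb{R}^{d\times h}$ with each $f_{ij}\in C^2(\mathbb{R}^d)$ and $\max\{|\mathbf{f}|,|\nabla\mathbf{f}|,|\nabla^2\mathbf{f}|\}<\infty$. Then a solution $\mathbf{y}$ of $\mathbf{y}(t)=\mathbf{y}_0+\int_0^t\mathbf{f}(\mathbf{y}(s))\,d\mathbf{x}(s)$, $t\in[0,1]$ (Young integral), exists, and for all $0\le s<t\le1$, $$|\mathbf{y}(s)-\mathbf{y}(t)|\le G_1^*|s-t|^\alpha,\qquad |\mathbf{y}(t)-\mathbf{y}(s)-\mathbf{f}(\mathbf{y}(s))(\mathbf{x}(t)-\mathbf{x}(s))|\le G_2^*|s-t|^{2\alpha}.$$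
   Context: For a vector or matrix, $|\cdot|$ denotes the maximum absolute value of its entries; $|\mathbf{f}|=\max_{ij}\sup|f_{ij}|$, $|\nabla\mathbf{f}|=\max_{ij}\sup|\nabla f_{ij}|$, $|\nabla^2\mathbf{f}|=\max_{ij}\sup|\nabla^2f_{ij}|$. $K(2\alpha)=1+\sum_{n\ge1}n^{-2\alpha}$. $G_1^*=2h\lceil(2dhC_\alpha K(2\alpha)|\nabla\mathbf{f}|)^{1/\alpha}\rceil^{1-\alpha}|\mathbf{f}|C_\alpha$, $G_2^*=dhK(2\alpha)|\nabla\mathbf{f}|C_\alpha G_1^*$. The Young integral is the limit of Riemann sums $\sum v(t_i)(u(t_{i+1})-u(t_i))$ as the partition mesh tends to $0$. *)

theory Defs
  imports "HOL-Analysis.Analysis"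
begin

definition maxabs :: "real ^ 'n \<Rightarrow> real" where
  "maxabs v = Max (range (\<lambda>i. \<bar>v $ i\<bar>))"

definition fine_partition :: "real \<Rightarrow> real \<Rightarrow> real \<Rightarrow> nat \<Rightarrow> (nat \<Rightarrow> real) \<Rightarrow> bool" where
  "fine_partition a b \<delta> n p \<longleftrightarrow> p 0 = a \<and> p n = b \<and>
     (\<forall>i<n. p i < p (Suc i) \<and> p (Suc i) - p i < \<delta>)"

definition has_young_integral ::
  "(real \<Rightarrow> real ^ 'h ^ 'd) \<Rightarrow> (real \<Rightarrow> real ^ 'h) \<Rightarrow> real \<Rightarrow> real \<Rightarrow> real ^ 'd \<Rightarrow> bool" where
  "has_young_integral v u a b I \<longleftrightarrow>
     (\<forall>\<epsilon>>0. \<exists>\<delta>>0. \<forall>n p. fine_partition a b \<delta> n p \<longrightarrow>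
        maxabs ((\<Sum>i<n. v (p i) *v (u (p (Suc i)) - u (p i))) - I) < \<epsilon>)"

definition Kconst :: "real \<Rightarrow> real" where
  "Kconst \<beta> = 1 + (\<Sum>n. 1 / (real (Suc n)) powr \<beta>)"

end

theory Submission
  imports Defs "HOL-Library.Diagonal_Subsequence"
begin

text \<open>The solution is obtained as a limit of Euler schemes \<open>y\<^sub>k\<^sub>+\<^sub>1 = y\<^sub>k + f(y\<^sub>k)(x(t\<^sub>k\<^sub>+\<^sub>1) - x(t\<^sub>k))\<close>
  on grids of mesh \<open>1/(N 2\<^sup>n)\<close>. The key tool is the discrete Young--Loeve inequality: removing
  a grid point whose neighbours are close changes a Riemann sum by a product of two increments,
  so the Riemann sum differs from its first term by at most \<open>K(2\<alpha>)\<close> times the product of the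
  Hoelder constants times \<open>|t - s|\<^sup>2\<^sup>\<alpha>\<close>. Applied to a scheme with its own best Hoelder constant
  \<open>A\<^sub>n\<close> on intervals of length \<open>1/N\<close>, this gives \<open>A\<^sub>n \<le> h|f|C\<^sub>\<alpha> + A\<^sub>n/2\<close> by the choice of \<open>N\<close>, hence bounds
  uniform in \<open>n\<close>. By compactness a subsequence converges on all grid points and, by
  equicontinuity, everywhere. The local bounds pass to the limit, extend to \<open>[0,1]\<close> by
  subdivision, and since \<open>2\<alpha> > 1\<close> the remainder bound makes the Riemann sums converge to
  \<open>y(t) - y\<^sub>0\<close>.\<close>

section \<open>The maximum norm\<close>

lemma abs_component_le_maxabs: "\<bar>v $ i\<bar> \<le> maxabs (v :: real ^ 'n)"
  unfolding maxabs_def by (rule Max_ge) auto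

lemma maxabs_leI: "(\<And>i. \<bar>(v :: real ^ 'n) $ i\<bar> \<le> c) \<Longrightarrow> maxabs v \<le> c"
  unfolding maxabs_def by (subst Max_le_iff) auto

lemma maxabs_nonneg: "0 \<le> maxabs (v :: real ^ 'n)"
  using abs_component_le_maxabs[of v undefined] by linarith

lemma maxabs_zero [simp]: "maxabs (0 :: real ^ 'n) = 0"
  using maxabs_nonneg[of "0 :: real ^ 'n"] maxabs_leI[of "0 :: real ^ 'n" 0] by simp

lemma maxabs_uminus [simp]: "maxabs (- (v :: real ^ 'n)) = maxabs v"
  unfolding maxabs_def by simp

lemma maxabs_minus_commute: "maxabs ((u :: real ^ 'n) - v) = maxabs (v - u)"
  unfolding maxabs_def by (simp add: abs_minus_commute)

lemma maxabs_add_le: "maxabs ((u :: real ^ 'n) + v) \<le> maxabs u + maxabs v"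
  by (rule maxabs_leI) (smt (verit) abs_component_le_maxabs vector_add_component)

lemma maxabs_sum_le: "maxabs (\<Sum>k\<in>S. (u k :: real ^ 'n)) \<le> (\<Sum>k\<in>S. maxabs (u k))"
proof (rule maxabs_leI)
  fix i
  have "\<bar>(\<Sum>k\<in>S. u k) $ i\<bar> = \<bar>\<Sum>k\<in>S. u k $ i\<bar>" by (simp add: sum_component)
  also have "\<dots> \<le> (\<Sum>k\<in>S. \<bar>u k $ i\<bar>)" by (rule sum_abs)
  also have "\<dots> \<le> (\<Sum>k\<in>S. maxabs (u k))" by (rule sum_mono) (rule abs_component_le_maxabs)
  finally show "\<bar>(\<Sum>k\<in>S. u k) $ i\<bar> \<le> (\<Sum>k\<in>S. maxabs (u k))" .
qed

lemma maxabs_matrix_vector_mult_le: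
  fixes A :: "real ^ 'h ^ 'd"
  assumes "\<And>i j. \<bar>A $ i $ j\<bar> \<le> c"
  shows "maxabs (A *v v) \<le> real CARD('h) * c * maxabs v"
proof (rule maxabs_leI)
  fix i
  have "\<bar>(A *v v) $ i\<bar> = \<bar>\<Sum>j\<in>UNIV. A $ i $ j * v $ j\<bar>"
    by (simp add: matrix_vector_mult_def)
  also have "\<dots> \<le> (\<Sum>j\<in>UNIV. \<bar>A $ i $ j\<bar> * \<bar>v $ j\<bar>)"
    by (rule order_trans[OF sum_abs]) (simp add: abs_mult)
  also have "\<dots> \<le> (\<Sum>j\<in>(UNIV::'h set). c * maxabs v)"
    by (rule sum_mono) (intro mult_mono assms abs_component_le_maxabs;
        simp add: maxabs_nonneg order_trans[OF abs_ge_zero assms])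
  also have "\<dots> = real CARD('h) * c * maxabs v" by simp
  finally show "\<bar>(A *v v) $ i\<bar> \<le> real CARD('h) * c * maxabs v" .
qed

lemma maxabs_le_norm: "maxabs (v :: real ^ 'n) \<le> norm v"
  by (rule maxabs_leI) (rule component_le_norm_cart)

lemma norm_le_card_maxabs: "norm (v :: real ^ 'n) \<le> real CARD('n) * maxabs v"
proof -
  have "norm v \<le> (\<Sum>i\<in>UNIV. \<bar>v $ i\<bar>)" by (rule norm_le_l1_cart)
  also have "\<dots> \<le> (\<Sum>i\<in>(UNIV::'n set). maxabs v)"
    by (rule sum_mono) (rule abs_component_le_maxabs)
  finally show ?thesis by simp
qed

lemma maxabs_le_limit:
  fixes U :: "nat \<Rightarrow> real ^ 'n"
  assumes "U \<longlonglongrightarrow> u" "W \<longlonglongrightarrow> w" "\<And>j. maxabs (U j) \<le> W j"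
  shows "maxabs u \<le> w"
proof (rule maxabs_leI)
  fix i
  have "(\<lambda>j. \<bar>U j $ i\<bar>) \<longlonglongrightarrow> \<bar>u $ i\<bar>" by (intro tendsto_rabs tendsto_vec_nth assms(1))
  moreover have "\<bar>U j $ i\<bar> \<le> W j" for j
    using abs_component_le_maxabs[of "U j" i] assms(3)[of j] by linarith
  ultimately show "\<bar>u $ i\<bar> \<le> w" using assms(2) by (intro LIMSEQ_le) auto
qed

section \<open>The discrete Young--Loeve inequality\<close>

definition skip :: "nat \<Rightarrow> (nat \<Rightarrow> 'a) \<Rightarrow> nat \<Rightarrow> 'a" where
  "skip i F k = F (if k < i then k else Suc k)"

lemma riemann_sum_skip:
  fixes G X :: "nat \<Rightarrow> real"
  assumes "Suc j \<le> n"
  shows "(\<Sum>k<Suc n. G k * (X (Suc k) - X k)) =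
     (\<Sum>k<n. skip (Suc j) G k * (skip (Suc j) X (Suc k) - skip (Suc j) X k))
      + (G (Suc j) - G j) * (X (Suc (Suc j)) - X (Suc j))"
  using assms
proof (induction n rule: dec_induct)
  case base
  have "(\<Sum>k<Suc j. skip (Suc j) G k * (skip (Suc j) X (Suc k) - skip (Suc j) X k))
     = (\<Sum>k<j. G k * (X (Suc k) - X k)) + G j * (X (Suc (Suc j)) - X j)"
    by (simp add: skip_def)
  then show ?case by (simp add: algebra_simps)
next
  case (step m)
  then show ?case by (simp add: skip_def)
qed

lemma increasing_upto_le:
  fixes p :: "nat \<Rightarrow> real"
  assumes "\<forall>k<n. p k < p (Suc k)" "a \<le> b" "b \<le> n"
  shows "p a \<le> p b"
  using assms(2,3)
proof (induction b rule: dec_induct)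
  case (step m)
  have "p m < p (Suc m)" using assms(1,3) step.hyps(2) by simp
  moreover have "p a \<le> p m" using step.IH step.hyps(2) assms(3) by simp
  ultimately show ?case by linarith
qed simp

lemma increasing_upto_less:
  fixes p :: "nat \<Rightarrow> real"
  assumes "\<forall>k<n. p k < p (Suc k)" "a < b" "b \<le> n"
  shows "p a < p b"
proof -
  have "p a < p (Suc a)" using assms by auto
  also have "p (Suc a) \<le> p b" using increasing_upto_le[OF assms(1)] assms by auto
  finally show ?thesis .
qed

lemma exists_le_mean:
  fixes w :: "nat \<Rightarrow> real"
  assumes "(\<Sum>j<m. w j) \<le> c" "0 < m"
  shows "\<exists>j<m. real m * w j \<le> c"
proof (rule ccontr)
  assume "\<not> ?thesis"
  then have "(\<Sum>j<m. c) < (\<Sum>j<m. real m * w j)"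
    using assms(2) by (intro sum_strict_mono) auto
  also have "\<dots> = real m * (\<Sum>j<m. w j)" by (simp add: sum_distrib_left)
  also have "\<dots> \<le> real m * c" using assms by (intro mult_left_mono) auto
  finally show False by simp
qed

lemma increasing_skip:
  fixes p :: "nat \<Rightarrow> real"
  assumes inc: "\<forall>k<Suc n. p k < p (Suc k)"
  shows "\<forall>k<n. skip i p k < skip i p (Suc k)"
proof (intro allI impI)
  fix k assume "k < n"
  then have "(if k < i then k else Suc k) < (if Suc k < i then Suc k else Suc (Suc k))"
    "(if Suc k < i then Suc k else Suc (Suc k)) \<le> Suc n"
    by auto
  then show "skip i p k < skip i p (Suc k)"
    unfolding skip_def by (rule increasing_upto_less[OF inc])
qed

lemma hoelder_skip:
  assumes "\<forall>a\<le>Suc n. \<forall>b\<le>Suc n. \<bar>G a - G b\<bar> \<le> C * \<bar>p a - p b\<bar> powr \<alpha>"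
  shows "\<forall>a\<le>n. \<forall>b\<le>n. \<bar>skip i G a - skip i G b\<bar> \<le> C * \<bar>skip i p a - skip i p b\<bar> powr \<alpha>"
proof -
  have "(if a < i then a else Suc a) \<le> Suc n" if "a \<le> n" for a using that by simp
  then show ?thesis using assms unfolding skip_def by simp
qed

lemma exists_close_neighbours:
  fixes p :: "nat \<Rightarrow> real"
  assumes inc: "\<forall>k<Suc n. p k < p (Suc k)" and n: "0 < n"
  shows "\<exists>j<n. real n * (p (Suc (Suc j)) - p j) \<le> 2 * (p (Suc n) - p 0)"
proof -
  have "(\<Sum>j<n. p (Suc (Suc j)) - p j)
      = (\<Sum>j<n. p (Suc (Suc j)) - p (Suc j)) + (\<Sum>j<n. p (Suc j) - p j)"
    by (simp add: sum.distrib[symmetric])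
  also have "\<dots> = (p (Suc n) - p 1) + (p n - p 0)"
    using sum_lessThan_telescope[of "\<lambda>j. p (Suc j)" n] sum_lessThan_telescope[of p n] by simp
  also have "\<dots> \<le> 2 * (p (Suc n) - p 0)"
    using increasing_upto_le[OF inc, of 0 1] increasing_upto_le[OF inc, of n "Suc n"] n by auto
  finally show ?thesis by (rule exists_le_mean[OF _ n])
qed

lemma abs_mult_increments_le:
  fixes u v a b c :: real
  assumes a: "0 \<le> a" and b: "0 \<le> b" and c: "(a + b) / 2 \<le> c" and al: "0 < \<alpha>"
    and Cu: "0 \<le> Cu" and Cv: "0 \<le> Cv"
    and u: "\<bar>u\<bar> \<le> Cu * a powr \<alpha>" and v: "\<bar>v\<bar> \<le> Cv * b powr \<alpha>"
  shows "\<bar>u * v\<bar> \<le> Cu * Cv * c powr (2*\<alpha>)"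
proof -
  have "a * b \<le> ((a + b) / 2)^2"
    using zero_le_power2[of "(a - b) / 2"] by (simp add: power2_eq_square field_simps)
  then have "a powr \<alpha> * b powr \<alpha> \<le> (((a + b) / 2)^2) powr \<alpha>"
    using a b al by (simp add: powr_mult[symmetric] powr_mono2)
  also have "\<dots> = ((a + b) / 2) powr (2 * \<alpha>)"
    using a b by (simp add: powr_powr[symmetric] powr_realpow)
  also have "\<dots> \<le> c powr (2 * \<alpha>)" using a b c al by (intro powr_mono2) auto
  finally have ab: "a powr \<alpha> * b powr \<alpha> \<le> c powr (2 * \<alpha>)" .
  have "\<bar>u * v\<bar> \<le> (Cu * a powr \<alpha>) * (Cv * b powr \<alpha>)"
    unfolding abs_mult using Cu by (intro mult_mono u v) auto
  also have "\<dots> \<le> Cu * Cv * c powr (2*\<alpha>)"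
    using mult_left_mono[OF ab, of "Cu * Cv"] Cu Cv by (simp add: algebra_simps)
  finally show ?thesis .
qed

lemma young_loeve_sum_bound:
  fixes G X p :: "nat \<Rightarrow> real"
  assumes al: "0 < \<alpha>" and Cg: "0 \<le> Cg" and Cx: "0 \<le> Cx"
    and inc: "\<forall>k<n. p k < p (Suc k)"
    and HG: "\<forall>a\<le>n. \<forall>b\<le>n. \<bar>G a - G b\<bar> \<le> Cg * \<bar>p a - p b\<bar> powr \<alpha>"
    and HX: "\<forall>a\<le>n. \<forall>b\<le>n. \<bar>X a - X b\<bar> \<le> Cx * \<bar>p a - p b\<bar> powr \<alpha>"
  shows "\<bar>(\<Sum>k<n. G k * (X (Suc k) - X k)) - G 0 * (X n - X 0)\<bar>
     \<le> Cg * Cx * (p n - p 0) powr (2*\<alpha>) * (\<Sum>m<n-1. 1 / real (Suc m) powr (2*\<alpha>))"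
  using inc HG HX
proof (induction n arbitrary: G X p rule: less_induct)
  case (less n)
  show ?case
  proof (cases "n \<le> 1")
    case True
    then have "n = 0 \<or> n = 1" by auto
    then show ?thesis by auto
  next
    case False
    then obtain n1 where n1: "n = Suc n1" "0 < n1" by (cases n) auto
    define T where "T = p n - p 0"
    txt \<open>Removing an interior point \<open>Suc j\<close> whose neighbours are at distance at most
      \<open>2 T / (n - 1)\<close> changes the Riemann sum by a single product of increments.\<close>
    obtain j where j: "j < n1" "real n1 * (p (Suc (Suc j)) - p j) \<le> 2 * T"
      using exists_close_neighbours[OF less.prems(1)[unfolded n1] n1(2)] unfolding T_def n1 by blast
    define G' where "G' = skip (Suc j) G"
    define X' where "X' = skip (Suc j) X"
    define p' where "p' = skip (Suc j) p"
    have IH: "\<bar>(\<Sum>k<n1. G' k * (X' (Suc k) - X' k)) - G' 0 * (X' n1 - X' 0)\<bar>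
     \<le> Cg * Cx * (p' n1 - p' 0) powr (2*\<alpha>) * (\<Sum>m<n1-1. 1 / real (Suc m) powr (2*\<alpha>))"
      using less.prems n1 unfolding G'_def X'_def p'_def
      by (intro less.IH increasing_skip hoelder_skip) auto
    have ends: "G' 0 = G 0" "X' 0 = X 0" "p' 0 = p 0" "X' n1 = X n" "p' n1 = p n"
      using j n1 by (auto simp: G'_def X'_def p'_def skip_def)
    have split: "(\<Sum>k<n. G k * (X (Suc k) - X k)) = (\<Sum>k<n1. G' k * (X' (Suc k) - X' k))
       + (G (Suc j) - G j) * (X (Suc (Suc j)) - X (Suc j))"
      unfolding G'_def X'_def using riemann_sum_skip[of j n1 G X] j n1 by simp
    have removed: "\<bar>(G (Suc j) - G j) * (X (Suc (Suc j)) - X (Suc j))\<bar>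
      \<le> Cg * Cx * (T / real n1) powr (2*\<alpha>)"
    proof (rule abs_mult_increments_le[OF _ _ _ al Cg Cx])
      have "p j < p (Suc j)" "p (Suc j) < p (Suc (Suc j))" using less.prems(1) j n1 by auto
      then show "0 \<le> p (Suc j) - p j" "0 \<le> p (Suc (Suc j)) - p (Suc j)"
        "\<bar>G (Suc j) - G j\<bar> \<le> Cg * (p (Suc j) - p j) powr \<alpha>"
        "\<bar>X (Suc (Suc j)) - X (Suc j)\<bar> \<le> Cx * (p (Suc (Suc j)) - p (Suc j)) powr \<alpha>"
        using less.prems(2)[rule_format, of "Suc j" j] less.prems(3)[rule_format, of "Suc (Suc j)" "Suc j"]
          j n1 by auto
      show "((p (Suc j) - p j) + (p (Suc (Suc j)) - p (Suc j))) / 2 \<le> T / real n1"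
        using j n1 by (simp add: field_simps)
    qed
    have last_term: "(T / real n1) powr (2*\<alpha>) = T powr (2*\<alpha>) * (1 / real (Suc (n1 - 1)) powr (2*\<alpha>))"
      using n1 increasing_upto_le[OF less.prems(1), of 0 n] by (simp add: T_def powr_divide)
    have "n - 1 = Suc (n1 - 1)" using n1 by simp
    then have sum_split: "(\<Sum>m<n-1. 1 / real (Suc m) powr (2*\<alpha>))
        = (\<Sum>m<n1-1. 1 / real (Suc m) powr (2*\<alpha>)) + 1 / real (Suc (n1 - 1)) powr (2*\<alpha>)"
      by (simp only: sum.lessThan_Suc)
    have "\<bar>(\<Sum>k<n. G k * (X (Suc k) - X k)) - G 0 * (X n - X 0)\<bar>
       \<le> \<bar>(\<Sum>k<n1. G' k * (X' (Suc k) - X' k)) - G' 0 * (X' n1 - X' 0)\<bar>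
         + \<bar>(G (Suc j) - G j) * (X (Suc (Suc j)) - X (Suc j))\<bar>"
      unfolding split ends by linarith
    also have "\<dots> \<le> Cg * Cx * T powr (2*\<alpha>) * (\<Sum>m<n1-1. 1 / real (Suc m) powr (2*\<alpha>))
         + Cg * Cx * (T powr (2*\<alpha>) * (1 / real (Suc (n1 - 1)) powr (2*\<alpha>)))"
      using IH[unfolded ends] removed[unfolded last_term] unfolding T_def ends by linarith
    also have "\<dots> = Cg * Cx * T powr (2*\<alpha>) * (\<Sum>m<n-1. 1 / real (Suc m) powr (2*\<alpha>))"
      unfolding sum_split by (simp add: algebra_simps)
    finally show ?thesis unfolding T_def .
  qed
qed

lemma summable_inverse_Suc_powr:
  assumes "1 < \<beta>"
  shows "summable (\<lambda>n. 1 / real (Suc n) powr \<beta>)"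
proof -
  have "summable (\<lambda>n. real n powr (- \<beta>))" using assms by (subst summable_real_powr_iff) simp
  then have "summable (\<lambda>n. real (Suc n) powr (- \<beta>))" by (subst summable_Suc_iff)
  then show ?thesis by (simp add: powr_minus_divide)
qed

lemma partial_sum_le_Kconst:
  assumes "1 < \<beta>"
  shows "(\<Sum>m<n. 1 / real (Suc m) powr \<beta>) \<le> Kconst \<beta>"
proof -
  have "(\<Sum>m<n. 1 / real (Suc m) powr \<beta>) \<le> (\<Sum>m. 1 / real (Suc m) powr \<beta>)"
    by (rule sum_le_suminf[OF summable_inverse_Suc_powr[OF assms]]) auto
  then show ?thesis unfolding Kconst_def by linarith
qed

lemma Kconst_nonneg:
  assumes "1 < \<beta>"
  shows "0 \<le> Kconst \<beta>"
  using partial_sum_le_Kconst[OF assms, of 0] by simp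

lemma young_loeve_matrix_sum_bound:
  fixes g :: "nat \<Rightarrow> real ^ 'h ^ 'd" and X :: "nat \<Rightarrow> real ^ 'h" and p :: "nat \<Rightarrow> real"
  assumes al: "1/2 < \<alpha>" and Cg: "0 \<le> Cg" and Cx: "0 \<le> Cx"
    and inc: "\<forall>k<n. p k < p (Suc k)"
    and HG: "\<forall>a\<le>n. \<forall>b\<le>n. \<forall>i j. \<bar>g a $ i $ j - g b $ i $ j\<bar> \<le> Cg * \<bar>p a - p b\<bar> powr \<alpha>"
    and HX: "\<forall>a\<le>n. \<forall>b\<le>n. maxabs (X a - X b) \<le> Cx * \<bar>p a - p b\<bar> powr \<alpha>"
  shows "maxabs ((\<Sum>k<n. g k *v (X (Suc k) - X k)) - g 0 *v (X n - X 0))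
     \<le> real CARD('h) * Cg * Cx * Kconst (2*\<alpha>) * (p n - p 0) powr (2*\<alpha>)"
proof (rule maxabs_leI)
  fix i
  let ?B = "Cg * Cx * (p n - p 0) powr (2*\<alpha>) * Kconst (2*\<alpha>)"
  have e: "((\<Sum>k<n. g k *v (X (Suc k) - X k)) - g 0 *v (X n - X 0)) $ i
      = (\<Sum>j\<in>UNIV. (\<Sum>k<n. g k $ i $ j * (X (Suc k) $ j - X k $ j)) - g 0 $ i $ j * (X n $ j - X 0 $ j))"
    by (simp add: matrix_vector_mult_def sum_subtractf) (rule sum.swap)
  have "\<bar>(\<Sum>k<n. g k $ i $ j * (X (Suc k) $ j - X k $ j)) - g 0 $ i $ j * (X n $ j - X 0 $ j)\<bar> \<le> ?B"
    for j
  proof -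
    have "\<forall>a\<le>n. \<forall>b\<le>n. \<bar>X a $ j - X b $ j\<bar> \<le> Cx * \<bar>p a - p b\<bar> powr \<alpha>"
      using HX abs_component_le_maxabs[of "X _ - X _" j] by (smt (verit) vector_minus_component)
    then have "\<bar>(\<Sum>k<n. g k $ i $ j * (X (Suc k) $ j - X k $ j)) - g 0 $ i $ j * (X n $ j - X 0 $ j)\<bar>
        \<le> Cg * Cx * (p n - p 0) powr (2*\<alpha>) * (\<Sum>m<n-1. 1 / real (Suc m) powr (2*\<alpha>))"
      using HG al by (intro young_loeve_sum_bound[OF _ Cg Cx inc]) auto
    also have "\<dots> \<le> ?B"
      using partial_sum_le_Kconst[of "2*\<alpha>" "n-1"] al Cg Cx by (intro mult_left_mono) auto
    finally show ?thesis .
  qed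
  then have "\<bar>((\<Sum>k<n. g k *v (X (Suc k) - X k)) - g 0 *v (X n - X 0)) $ i\<bar>
     \<le> (\<Sum>j\<in>(UNIV::'h set). ?B)"
    unfolding e by (intro order_trans[OF sum_abs] sum_mono)
  then show "\<bar>((\<Sum>k<n. g k *v (X (Suc k) - X k)) - g 0 *v (X n - X 0)) $ i\<bar>
     \<le> real CARD('h) * Cg * Cx * Kconst (2*\<alpha>) * (p n - p 0) powr (2*\<alpha>)"
    by (simp add: ac_simps)
qed

section \<open>Hoelder paths and Riemann sums\<close>

lemma lipschitz_of_bounded_gradient:
  fixes g :: "real ^ 'd \<Rightarrow> real"
  assumes deriv: "\<And>z. (g has_derivative (\<lambda>v. Dg z \<bullet> v)) (at z)"
    and bound: "\<And>z k. \<bar>Dg z $ k\<bar> \<le> F"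
  shows "\<bar>g z - g w\<bar> \<le> real CARD('d) * F * maxabs (z - w)"
proof -
  have inner_le: "\<bar>Dg u \<bullet> v\<bar> \<le> real CARD('d) * F * maxabs v" for u v
  proof -
    have "\<bar>Dg u \<bullet> v\<bar> \<le> (\<Sum>k\<in>UNIV. \<bar>Dg u $ k\<bar> * \<bar>v $ k\<bar>)"
      unfolding inner_vec_def by (rule order_trans[OF sum_abs]) (simp add: abs_mult)
    also have "\<dots> \<le> (\<Sum>k\<in>(UNIV::'d set). F * maxabs v)"
      by (rule sum_mono, rule mult_mono[OF bound abs_component_le_maxabs])
        (auto intro: order_trans[OF abs_ge_zero bound])
    finally show ?thesis by simp
  qed
  define \<phi> where "\<phi> = (\<lambda>\<tau>. g (w + \<tau> *\<^sub>R (z - w)))"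
  have der: "DERIV \<phi> \<tau> :> Dg (w + \<tau> *\<^sub>R (z - w)) \<bullet> (z - w)" for \<tau>
  proof -
    have "((\<lambda>\<tau>. w + \<tau> *\<^sub>R (z - w)) has_derivative (\<lambda>h. h *\<^sub>R (z - w))) (at \<tau>)"
      by (auto intro!: derivative_eq_intros)
    then have "(\<phi> has_derivative (\<lambda>h. Dg (w + \<tau> *\<^sub>R (z - w)) \<bullet> (h *\<^sub>R (z - w)))) (at \<tau>)"
      unfolding \<phi>_def by (rule has_derivative_compose) (rule deriv)
    then show ?thesis by (rule has_derivative_imp_has_field_derivative) simp
  qed
  obtain \<xi> where "\<phi> 1 - \<phi> 0 = (1 - 0) * (Dg (w + \<xi> *\<^sub>R (z - w)) \<bullet> (z - w))"
    using MVT2[of 0 1 \<phi>, OF _ der] by auto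
  then show ?thesis unfolding \<phi>_def using inner_le by simp
qed

lemma hoelder_tendsto:
  fixes x :: "real \<Rightarrow> real ^ 'h"
  assumes holder: "\<forall>s\<in>{0..1}. \<forall>t\<in>{0..1}. maxabs (x t - x s) \<le> C * \<bar>t - s\<bar> powr \<alpha>"
    and al: "0 < \<alpha>" and u: "\<And>j. u j \<in> {0..1}" and ut: "u \<longlonglongrightarrow> t" and t: "t \<in> {0..1}"
  shows "(\<lambda>j. x (u j)) \<longlonglongrightarrow> x t"
proof -
  have "norm (x (u j) - x t) \<le> real CARD('h) * (C * \<bar>u j - t\<bar> powr \<alpha>)" for j
  proof -
    have "norm (x (u j) - x t) \<le> real CARD('h) * maxabs (x (u j) - x t)"
      by (rule norm_le_card_maxabs)
    also have "\<dots> \<le> real CARD('h) * (C * \<bar>u j - t\<bar> powr \<alpha>)"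
      using holder u t by (intro mult_left_mono) auto
    finally show ?thesis .
  qed
  moreover have "(\<lambda>j. u j - t) \<longlonglongrightarrow> 0" using ut by (simp add: LIM_zero_iff)
  then have "(\<lambda>j. \<bar>u j - t\<bar> powr \<alpha>) \<longlonglongrightarrow> 0"
    using al by (intro tendsto_zero_powrI tendsto_rabs_zero) auto
  then have "(\<lambda>j. real CARD('h) * (C * \<bar>u j - t\<bar> powr \<alpha>)) \<longlonglongrightarrow> 0"
    by (auto intro!: tendsto_mult_right_zero)
  ultimately have "(\<lambda>j. x (u j) - x t) \<longlonglongrightarrow> 0"
    by (rule Lim_null_comparison[OF always_eventually[OF allI]])
  then show ?thesis by (simp add: LIM_zero_iff)
qed

lemma lipschitz_matrix_vector_mult_tendsto:
  fixes f :: "real ^ 'd \<Rightarrow> real ^ 'h ^ 'd"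
  assumes lip: "\<And>z w i j. \<bar>f z $ i $ j - f w $ i $ j\<bar> \<le> L * maxabs (z - w)"
    and U: "U \<longlonglongrightarrow> u" and V: "V \<longlonglongrightarrow> v"
  shows "(\<lambda>j. f (U j) *v V j) \<longlonglongrightarrow> f u *v v"
proof (rule vec_tendstoI)
  fix i
  have entry: "(\<lambda>j. f (U j) $ i $ k) \<longlonglongrightarrow> f u $ i $ k" for k
  proof -
    have "norm (f (U j) $ i $ k - f u $ i $ k) \<le> \<bar>L\<bar> * norm (U j - u)" for j
    proof -
      have "norm (f (U j) $ i $ k - f u $ i $ k) \<le> L * maxabs (U j - u)" using lip by simp
      also have "\<dots> \<le> \<bar>L\<bar> * maxabs (U j - u)" by (intro mult_right_mono maxabs_nonneg) simp
      also have "\<dots> \<le> \<bar>L\<bar> * norm (U j - u)" by (intro mult_left_mono maxabs_le_norm) simp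
      finally show ?thesis .
    qed
    moreover have "(\<lambda>j. \<bar>L\<bar> * norm (U j - u)) \<longlonglongrightarrow> 0"
      using U by (intro tendsto_mult_right_zero tendsto_norm_zero) (simp add: LIM_zero_iff)
    ultimately have "(\<lambda>j. f (U j) $ i $ k - f u $ i $ k) \<longlonglongrightarrow> 0"
      by (rule Lim_null_comparison[OF always_eventually[OF allI]])
    then show ?thesis by (simp add: LIM_zero_iff)
  qed
  have "(\<lambda>j. \<Sum>k\<in>UNIV. f (U j) $ i $ k * V j $ k) \<longlonglongrightarrow> (\<Sum>k\<in>UNIV. f u $ i $ k * v $ k)"
    by (intro tendsto_sum tendsto_mult entry tendsto_vec_nth V)
  then show "(\<lambda>j. (f (U j) *v V j) $ i) \<longlonglongrightarrow> (f u *v v) $ i"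
    by (simp add: matrix_vector_mult_def)
qed

lemma lipschitz_hoelder_comp:
  fixes f :: "real ^ 'd \<Rightarrow> real ^ 'h ^ 'd"
  assumes lip: "\<And>z w i j. \<bar>f z $ i $ j - f w $ i $ j\<bar> \<le> L * maxabs (z - w)" and L: "0 \<le> L"
    and hoelder: "maxabs (u - v) \<le> G * d powr \<alpha>"
  shows "\<bar>f u $ i $ j - f v $ i $ j\<bar> \<le> (L * G) * d powr \<alpha>"
proof -
  have "\<bar>f u $ i $ j - f v $ i $ j\<bar> \<le> L * maxabs (u - v)" by (rule lip)
  also have "\<dots> \<le> L * (G * d powr \<alpha>)" using L hoelder by (rule mult_left_mono[rotated])
  finally show ?thesis by simp
qed

lemma sum_increments_minus:
  "(\<Sum>i<n. y (p (Suc i)) - y (p i) - g i) = y (p n) - y (p 0) - (\<Sum>i<n. g i)"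
  for y :: "'a \<Rightarrow> 'b :: ab_group_add"
  using sum_lessThan_telescope[of "\<lambda>i. y (p i)" n] by (simp add: sum_subtractf)

lemma riemann_sum_error_le:
  fixes y :: "real \<Rightarrow> real ^ 'd" and x :: "real \<Rightarrow> real ^ 'h" and f :: "real ^ 'd \<Rightarrow> real ^ 'h ^ 'd"
  assumes rem: "\<And>s t. s \<in> {0..1} \<Longrightarrow> t \<in> {0..1} \<Longrightarrow> s < t \<Longrightarrow>
      maxabs (y t - y s - f (y s) *v (x t - x s)) \<le> B * (t - s) powr (2*\<alpha>)"
    and B: "0 \<le> B" and al: "1/2 < \<alpha>" and t: "t \<in> {0..1}"
    and partition: "fine_partition 0 t \<delta> n p"
  shows "maxabs ((\<Sum>i<n. f (y (p i)) *v (x (p (Suc i)) - x (p i))) - (y t - y 0))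
    \<le> B * \<delta> powr (2*\<alpha> - 1) * t"
proof -
  have p0: "p 0 = 0" and pn: "p n = t" and inc: "\<forall>i<n. p i < p (Suc i)"
    and fine: "\<forall>i<n. p (Suc i) - p i < \<delta>"
    using partition unfolding fine_partition_def by auto
  have pin: "p i \<in> {0..1}" if "i \<le> n" for i
    using increasing_upto_le[OF inc, of 0 i] increasing_upto_le[OF inc, of i n] that p0 pn t
    by auto
  define \<theta> where "\<theta> i = y (p (Suc i)) - y (p i) - f (y (p i)) *v (x (p (Suc i)) - x (p i))" for i
  have "(\<Sum>i<n. \<theta> i) = y t - y 0 - (\<Sum>i<n. f (y (p i)) *v (x (p (Suc i)) - x (p i)))"
    unfolding \<theta>_def
    using sum_increments_minus[of y p "\<lambda>i. f (y (p i)) *v (x (p (Suc i)) - x (p i))" n] p0 pn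
    by simp
  then have ident: "(\<Sum>i<n. f (y (p i)) *v (x (p (Suc i)) - x (p i))) - (y t - y 0)
      = - (\<Sum>i<n. \<theta> i)"
    by simp
  txt \<open>Since \<open>2\<alpha> > 1\<close>, each remainder is small compared to the length of its subinterval.\<close>
  have \<theta>_le: "maxabs (\<theta> i) \<le> B * \<delta> powr (2*\<alpha> - 1) * (p (Suc i) - p i)" if i: "i < n" for i
  proof -
    define D where "D = p (Suc i) - p i"
    have D0: "0 < D" and D\<delta>: "D < \<delta>" unfolding D_def using inc fine i by auto
    have "maxabs (\<theta> i) \<le> B * D powr (2*\<alpha>)"
      unfolding \<theta>_def D_def using i inc by (intro rem pin) auto
    also have "D powr (2*\<alpha>) = D powr (2*\<alpha> - 1) * D"
      using powr_add[of D "2*\<alpha> - 1" 1] D0 by simp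
    also have "D powr (2*\<alpha> - 1) \<le> \<delta> powr (2*\<alpha> - 1)"
      using D0 D\<delta> al by (intro powr_mono2) auto
    then have "B * (D powr (2*\<alpha> - 1) * D) \<le> B * (\<delta> powr (2*\<alpha> - 1) * D)"
      using B D0 by (intro mult_left_mono mult_right_mono) auto
    finally show ?thesis unfolding D_def by (simp add: ac_simps)
  qed
  have "maxabs ((\<Sum>i<n. f (y (p i)) *v (x (p (Suc i)) - x (p i))) - (y t - y 0))
      \<le> (\<Sum>i<n. maxabs (\<theta> i))"
    unfolding ident maxabs_uminus by (rule maxabs_sum_le)
  also have "\<dots> \<le> (\<Sum>i<n. B * \<delta> powr (2*\<alpha> - 1) * (p (Suc i) - p i))"
    by (rule sum_mono) (use \<theta>_le in auto)
  also have "\<dots> = B * \<delta> powr (2*\<alpha> - 1) * t"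
    using sum_lessThan_telescope[of p n] unfolding p0 pn by (simp add: sum_distrib_left[symmetric])
  finally show ?thesis .
qed

lemma has_young_integral_of_remainder_bound:
  fixes y :: "real \<Rightarrow> real ^ 'd" and x :: "real \<Rightarrow> real ^ 'h" and f :: "real ^ 'd \<Rightarrow> real ^ 'h ^ 'd"
  assumes rem: "\<And>s t. s \<in> {0..1} \<Longrightarrow> t \<in> {0..1} \<Longrightarrow> s < t \<Longrightarrow>
      maxabs (y t - y s - f (y s) *v (x t - x s)) \<le> B * (t - s) powr (2*\<alpha>)"
    and B: "0 \<le> B" and al: "1/2 < \<alpha>" and t: "t \<in> {0..1}"
  shows "has_young_integral (\<lambda>s. f (y s)) x 0 t (y t - y 0)"
  unfolding has_young_integral_def
proof (intro allI impI)
  fix \<epsilon> :: real assume \<epsilon>: "0 < \<epsilon>"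
  define z where "z = \<epsilon> / (B + 1)"
  have z0: "0 < z" unfolding z_def using \<epsilon> B by simp
  define \<delta> where "\<delta> = z powr (1 / (2*\<alpha> - 1))"
  have \<delta>z: "\<delta> powr (2*\<alpha> - 1) = z" unfolding \<delta>_def using z0 al by (simp add: powr_powr)
  have "B * z * t \<le> B * z" using t B z0 by (simp add: mult_left_le)
  also have "\<dots> < \<epsilon>" unfolding z_def using B \<epsilon> by (simp add: field_simps)
  finally have Bz: "B * z * t < \<epsilon>" .
  show "\<exists>\<delta>>0. \<forall>n p. fine_partition 0 t \<delta> n p \<longrightarrow>
      maxabs ((\<Sum>i<n. f (y (p i)) *v (x (p (Suc i)) - x (p i))) - (y t - y 0)) < \<epsilon>"
  proof (intro exI conjI allI impI)
    show "0 < \<delta>" unfolding \<delta>_def using z0 by simp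
    fix n p assume "fine_partition 0 t \<delta> n p"
    from riemann_sum_error_le[OF rem B al t this] show "maxabs ((\<Sum>i<n. f (y (p i)) *v (x (p (Suc i)) - x (p i))) - (y t - y 0)) < \<epsilon>"
      using Bz unfolding \<delta>z by linarith
  qed
qed

lemma uniform_partition:
  fixes s t :: real and m :: nat
  assumes s: "s \<in> {0..1}" and t: "t \<in> {0..1}" and st: "s \<le> t" and m: "0 < m"
  defines "p \<equiv> \<lambda>i. s + real i * (t - s) / real m"
  shows "p 0 = s" "p m = t" "\<And>i. i \<le> m \<Longrightarrow> p i \<in> {0..1}"
    "\<And>i. p (Suc i) - p i = (t - s) / real m"
proof -
  show "p 0 = s" "p m = t" using m unfolding p_def by auto
  show "p (Suc i) - p i = (t - s) / real m" for i unfolding p_def using m by (simp add: field_simps)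
  show "p i \<in> {0..1}" if "i \<le> m" for i
  proof -
    have "real i * (t - s) / real m \<le> real m * (t - s) / real m"
      using that st m by (intro divide_right_mono mult_right_mono) auto
    then show ?thesis unfolding p_def using s t st m by auto
  qed
qed

lemma hoelder_of_local_hoelder:
  fixes y :: "real \<Rightarrow> real ^ 'd"
  assumes loc: "\<And>s t. s \<in> {0..1} \<Longrightarrow> t \<in> {0..1} \<Longrightarrow> s \<le> t \<Longrightarrow> t - s \<le> 1 / real N \<Longrightarrow>
      maxabs (y t - y s) \<le> A * (t - s) powr \<alpha>"
    and N: "0 < N" and s: "s \<in> {0..1}" and t: "t \<in> {0..1}" and st: "s \<le> t"
  shows "maxabs (y t - y s) \<le> A * real N powr (1 - \<alpha>) * (t - s) powr \<alpha>"
proof -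
  define p where "p i = s + real i * (t - s) / real N" for i
  note p = uniform_partition[OF s t st N, folded p_def]
  have "(t - s) / real N \<le> 1 / real N" "0 \<le> (t - s) / real N"
    using s t st N by (auto intro: divide_right_mono)
  then have short: "p i \<le> p (Suc i)" "p (Suc i) - p i \<le> 1 / real N" for i
    using p(4)[of i] by linarith+
  have step: "maxabs (y (p (Suc i)) - y (p i)) \<le> A * ((t - s) / real N) powr \<alpha>"
    if "i < N" for i
  proof -
    have "maxabs (y (p (Suc i)) - y (p i)) \<le> A * (p (Suc i) - p i) powr \<alpha>"
      using that by (intro loc p(3) short) auto
    then show ?thesis unfolding p(4) .
  qed
  have "y t - y s = (\<Sum>i<N. y (p (Suc i)) - y (p i))"
    using sum_lessThan_telescope[of "\<lambda>i. y (p i)" N] p by simp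
  then have "maxabs (y t - y s) \<le> (\<Sum>i<N. maxabs (y (p (Suc i)) - y (p i)))"
    by (simp add: maxabs_sum_le)
  also have "\<dots> \<le> real N * (A * ((t - s) / real N) powr \<alpha>)"
    using sum_mono[of "{..<N}", OF step] by simp
  also have "\<dots> = A * (real N / real N powr \<alpha>) * (t - s) powr \<alpha>"
    using st N by (simp add: powr_divide)
  also have "\<dots> = A * real N powr (1 - \<alpha>) * (t - s) powr \<alpha>"
    using N by (simp add: powr_diff)
  finally show ?thesis .
qed

lemma remainder_le_refinement:
  fixes y :: "real \<Rightarrow> real ^ 'd" and x :: "real \<Rightarrow> real ^ 'h" and f :: "real ^ 'd \<Rightarrow> real ^ 'h ^ 'd"
  assumes al: "1/2 < \<alpha>" and C: "0 \<le> C" and L: "0 \<le> L" and G: "0 \<le> G"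
    and x_hoelder: "\<forall>s\<in>{0..1}. \<forall>t\<in>{0..1}. maxabs (x t - x s) \<le> C * \<bar>t - s\<bar> powr \<alpha>"
    and lip: "\<And>z w i j. \<bar>f z $ i $ j - f w $ i $ j\<bar> \<le> L * maxabs (z - w)"
    and y_hoelder: "\<And>u v. u \<in> {0..1} \<Longrightarrow> v \<in> {0..1} \<Longrightarrow> maxabs (y u - y v) \<le> G * \<bar>u - v\<bar> powr \<alpha>"
    and loc: "\<And>s t. s \<in> {0..1} \<Longrightarrow> t \<in> {0..1} \<Longrightarrow> s \<le> t \<Longrightarrow> t - s \<le> 1 / real N \<Longrightarrow>
      maxabs (y t - y s - f (y s) *v (x t - x s)) \<le> B * (t - s) powr (2*\<alpha>)"
    and N: "0 < N" and m: "N \<le> m" and s: "s \<in> {0..1}" and t: "t \<in> {0..1}" and st: "s < t"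
  shows "maxabs (y t - y s - f (y s) *v (x t - x s))
      \<le> real CARD('h) * (L * G) * C * Kconst (2*\<alpha>) * (t - s) powr (2*\<alpha>)
        + B * (t - s) powr (2*\<alpha>) * real m powr (1 - 2*\<alpha>)"
proof -
  have m0: "0 < m" using m N by simp
  define p where "p i = s + real i * (t - s) / real m" for i
  note p = uniform_partition[OF s t less_imp_le[OF st] m0, folded p_def]
  have pos: "0 < (t - s) / real m" using st m0 by simp
  then have inc: "\<forall>k<m. p k < p (Suc k)" using p(4) by (metis diff_gt_0_iff_gt)
  have "(t - s) / real m \<le> 1 / real m" using s t m0 by (intro divide_right_mono) auto
  also have "\<dots> \<le> 1 / real N" using m N by (intro divide_left_mono) auto
  finally have short: "p i \<le> p (Suc i)" "p (Suc i) - p i \<le> 1 / real N" for i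
    using p(4)[of i] pos by linarith+
  define \<theta> where "\<theta> i = y (p (Suc i)) - y (p i) - f (y (p i)) *v (x (p (Suc i)) - x (p i))" for i
  define R where "R = (\<Sum>k<m. f (y (p k)) *v (x (p (Suc k)) - x (p k))) - f (y (p 0)) *v (x (p m) - x (p 0))"
  have "(\<Sum>i<m. \<theta> i) = y t - y s - (\<Sum>k<m. f (y (p k)) *v (x (p (Suc k)) - x (p k)))"
    unfolding \<theta>_def
    using sum_increments_minus[of y p "\<lambda>i. f (y (p i)) *v (x (p (Suc i)) - x (p i))" m] p(1,2) by simp
  then have split: "y t - y s - f (y s) *v (x t - x s) = (\<Sum>i<m. \<theta> i) + R"
    unfolding R_def p(1,2) by simp
  have HG: "\<forall>a\<le>m. \<forall>b\<le>m. \<forall>i j. \<bar>f (y (p a)) $ i $ j - f (y (p b)) $ i $ j\<bar> \<le> (L * G) * \<bar>p a - p b\<bar> powr \<alpha>"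
    using p(3) y_hoelder by (blast intro: lipschitz_hoelder_comp[OF lip L])
  have HX: "\<forall>a\<le>m. \<forall>b\<le>m. maxabs (x (p a) - x (p b)) \<le> C * \<bar>p a - p b\<bar> powr \<alpha>"
    using x_hoelder p(3) by auto
  have R_le: "maxabs R \<le> real CARD('h) * (L * G) * C * Kconst (2*\<alpha>) * (t - s) powr (2*\<alpha>)"
    unfolding R_def using young_loeve_matrix_sum_bound[OF al _ C inc HG HX] L G p(1,2) by simp
  have "maxabs (\<theta> i) \<le> B * ((t - s) / real m) powr (2*\<alpha>)" if "i < m" for i
  proof -
    have "maxabs (\<theta> i) \<le> B * (p (Suc i) - p i) powr (2*\<alpha>)"
      unfolding \<theta>_def using that by (intro loc p(3) short) auto
    then show ?thesis unfolding p(4) .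
  qed
  then have "maxabs (\<Sum>i<m. \<theta> i) \<le> (\<Sum>i<m. B * ((t - s) / real m) powr (2*\<alpha>))"
    by (intro order_trans[OF maxabs_sum_le sum_mono]) auto
  also have "\<dots> = real m * (B * ((t - s) / real m) powr (2*\<alpha>))" by simp
  also have "\<dots> = B * (t - s) powr (2*\<alpha>) * (real m / real m powr (2*\<alpha>))"
    using st m0 by (simp add: powr_divide)
  also have "\<dots> = B * (t - s) powr (2*\<alpha>) * real m powr (1 - 2*\<alpha>)"
    using m0 by (simp add: powr_diff)
  finally show ?thesis unfolding split using maxabs_add_le[of "\<Sum>i<m. \<theta> i" R] R_le by linarith
qed

lemma remainder_bound_of_local:
  fixes y :: "real \<Rightarrow> real ^ 'd" and x :: "real \<Rightarrow> real ^ 'h" and f :: "real ^ 'd \<Rightarrow> real ^ 'h ^ 'd"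
  assumes al: "1/2 < \<alpha>" and C: "0 \<le> C" and L: "0 \<le> L" and G: "0 \<le> G"
    and x_hoelder: "\<forall>s\<in>{0..1}. \<forall>t\<in>{0..1}. maxabs (x t - x s) \<le> C * \<bar>t - s\<bar> powr \<alpha>"
    and lip: "\<And>z w i j. \<bar>f z $ i $ j - f w $ i $ j\<bar> \<le> L * maxabs (z - w)"
    and y_hoelder: "\<And>u v. u \<in> {0..1} \<Longrightarrow> v \<in> {0..1} \<Longrightarrow> maxabs (y u - y v) \<le> G * \<bar>u - v\<bar> powr \<alpha>"
    and loc: "\<And>s t. s \<in> {0..1} \<Longrightarrow> t \<in> {0..1} \<Longrightarrow> s \<le> t \<Longrightarrow> t - s \<le> 1 / real N \<Longrightarrow>
      maxabs (y t - y s - f (y s) *v (x t - x s)) \<le> B * (t - s) powr (2*\<alpha>)"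
    and N: "0 < N" and s: "s \<in> {0..1}" and t: "t \<in> {0..1}" and st: "s < t"
  shows "maxabs (y t - y s - f (y s) *v (x t - x s))
      \<le> real CARD('h) * (L * G) * C * Kconst (2*\<alpha>) * (t - s) powr (2*\<alpha>)"
proof -
  txt \<open>As the partition is refined, the local remainders add up to \<open>O(m\<^sup>1\<^sup>-\<^sup>2\<^sup>\<alpha>) \<longrightarrow> 0\<close>.\<close>
  define D where "D = real CARD('h) * (L * G) * C * Kconst (2*\<alpha>) * (t - s) powr (2*\<alpha>)"
  have "(\<lambda>m. real m powr (1 - 2*\<alpha>)) \<longlonglongrightarrow> 0"
    using al by (intro tendsto_neg_powr filterlim_real_sequentially) auto
  then have "(\<lambda>m. D + B * (t - s) powr (2*\<alpha>) * real m powr (1 - 2*\<alpha>))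
      \<longlonglongrightarrow> D + B * (t - s) powr (2*\<alpha>) * 0"
    by (intro tendsto_intros)
  then have "maxabs (y t - y s - f (y s) *v (x t - x s)) \<le> D + B * (t - s) powr (2*\<alpha>) * 0"
    by (rule LIMSEQ_le_const)
      (use remainder_le_refinement[OF al C L G x_hoelder lip y_hoelder loc N _ s t st] D_def in blast)
  then show ?thesis unfolding D_def by simp
qed

lemma nat_floor_bounds:
  assumes "0 \<le> u"
  shows "real (nat \<lfloor>u\<rfloor>) \<le> u" "u < real (nat \<lfloor>u\<rfloor>) + 1"
proof -
  show "real (nat \<lfloor>u\<rfloor>) \<le> u" by (rule of_nat_floor[OF assms])
  have "real (nat \<lfloor>u\<rfloor>) = of_int \<lfloor>u\<rfloor>" using assms by simp
  then show "u < real (nat \<lfloor>u\<rfloor>) + 1" using real_of_int_floor_add_one_gt[of u] by simp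
qed

section \<open>The Euler scheme\<close>

locale euler_scheme =
  fixes x :: "real \<Rightarrow> real ^ 'h" and f :: "real ^ 'd \<Rightarrow> real ^ 'h ^ 'd" and y0 :: "real ^ 'd"
    and \<alpha> C F0 L :: real and N :: nat
  assumes alpha: "1/2 < \<alpha>" and C_nonneg: "0 \<le> C"
    and x_hoelder: "\<forall>s\<in>{0..1}. \<forall>t\<in>{0..1}. maxabs (x t - x s) \<le> C * \<bar>t - s\<bar> powr \<alpha>"
    and f_bound: "\<And>z i j. \<bar>f z $ i $ j\<bar> \<le> F0"
    and f_lipschitz: "\<And>z w i j. \<bar>f z $ i $ j - f w $ i $ j\<bar> \<le> L * maxabs (z - w)"
    and L_nonneg: "0 \<le> L" and N_pos: "0 < N"
    and N_large: "2 * real CARD('h) * C * Kconst (2*\<alpha>) * L \<le> real N powr \<alpha>"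
begin

definition A :: real where "A = 2 * real CARD('h) * F0 * C"

definition B :: real where "B = real CARD('h) * L * A * C * Kconst (2*\<alpha>)"

lemma alpha_pos: "0 < \<alpha>" using alpha by simp

lemma K_nonneg: "0 \<le> Kconst (2*\<alpha>)" using alpha by (intro Kconst_nonneg) simp

lemma F0_nonneg: "0 \<le> F0" using f_bound by (meson abs_ge_zero order_trans)

lemma A_nonneg: "0 \<le> A" unfolding A_def using F0_nonneg C_nonneg by simp

lemma maxabs_f_mult_le: "maxabs (f z *v v) \<le> real CARD('h) * F0 * maxabs v"
  by (rule maxabs_matrix_vector_mult_le) (rule f_bound)

text \<open>A window of \<open>2\<^sup>n\<close> steps of the \<open>n\<close>-th scheme has length \<open>1/N\<close>.\<close>

definition steps :: "nat \<Rightarrow> nat" where "steps n = N * 2^n"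

definition node :: "nat \<Rightarrow> nat \<Rightarrow> real" where "node n k = real k / real (steps n)"

primrec euler :: "nat \<Rightarrow> nat \<Rightarrow> real ^ 'd" where
  "euler n 0 = y0"
| "euler n (Suc k) = euler n k + f (euler n k) *v (x (node n (Suc k)) - x (node n k))"

lemma steps_pos: "0 < steps n" unfolding steps_def using N_pos by simp

lemma steps_ge: "2^n \<le> steps n" unfolding steps_def using N_pos by simp

lemma node_in_unit: "k \<le> steps n \<Longrightarrow> node n k \<in> {0..1}"
  unfolding node_def using steps_pos[of n] by (auto simp: field_simps)

lemma node_less: "a < b \<Longrightarrow> node n a < node n b"
  unfolding node_def using steps_pos[of n] by (simp add: divide_strict_right_mono)

lemma node_mono: "a \<le> b \<Longrightarrow> node n a \<le> node n b"
  unfolding node_def using steps_pos[of n] by (simp add: divide_right_mono)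

lemma node_diff_le_window:
  assumes "a \<le> b" "b - a \<le> 2^n"
  shows "node n b - node n a \<le> 1 / real N"
proof -
  have "node n b - node n a = real (b - a) / (real N * 2^n)"
    using assms(1) by (simp add: node_def steps_def of_nat_diff diff_divide_distrib)
  also have "\<dots> \<le> 2^n / (real N * 2^n)"
    using assms(2) N_pos
    by (intro divide_right_mono) (auto simp del: of_nat_diff simp add: of_nat_le_iff[symmetric])
  finally show ?thesis by simp
qed

lemma node_diff_powr_le_1:
  assumes "a \<le> b" "b \<le> steps n"
  shows "(node n b - node n a) powr \<alpha> \<le> 1"
proof -
  have "0 \<le> node n b - node n a" "node n b - node n a \<le> 1"
    using node_mono[OF assms(1)] node_in_unit[of a n] node_in_unit[OF assms(2)] assms by auto
  then have "(node n b - node n a) powr \<alpha> \<le> 1 powr \<alpha>" using alpha_pos by (intro powr_mono2) auto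
  then show ?thesis by simp
qed

lemma euler_diff_eq_sum:
  assumes "a \<le> b"
  shows "euler n b - euler n a
    = (\<Sum>m<b-a. f (euler n (a+m)) *v (x (node n (Suc (a+m))) - x (node n (a+m))))"
  using assms
proof (induction b rule: dec_induct)
  case (step b)
  have "Suc b - a = Suc (b - a)" using step.hyps by simp
  then show ?case using step by simp
qed simp

lemma euler_remainder_le:
  assumes ab: "a \<le> b" "b \<le> steps n" and Cy: "0 \<le> Cy"
    and H: "\<And>u v. a \<le> u \<Longrightarrow> u \<le> b \<Longrightarrow> a \<le> v \<Longrightarrow> v \<le> b \<Longrightarrow>
              maxabs (euler n u - euler n v) \<le> Cy * \<bar>node n u - node n v\<bar> powr \<alpha>"
  shows "maxabs (euler n b - euler n a - f (euler n a) *v (x (node n b) - x (node n a)))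
          \<le> real CARD('h) * (L * Cy) * C * Kconst (2*\<alpha>) * (node n b - node n a) powr (2*\<alpha>)"
proof -
  define g where "g = (\<lambda>m. f (euler n (a+m)))"
  define X where "X = (\<lambda>m. x (node n (a+m)))"
  define p where "p = (\<lambda>m. node n (a+m))"
  have inc: "\<forall>k<b-a. p k < p (Suc k)" unfolding p_def by (auto intro: node_less)
  have HG: "\<forall>u\<le>b-a. \<forall>v\<le>b-a. \<forall>i j. \<bar>g u $ i $ j - g v $ i $ j\<bar> \<le> (L * Cy) * \<bar>p u - p v\<bar> powr \<alpha>"
    unfolding g_def p_def using ab
    by (auto intro!: lipschitz_hoelder_comp[OF f_lipschitz L_nonneg] H)
  have HX: "\<forall>u\<le>b-a. \<forall>v\<le>b-a. maxabs (X u - X v) \<le> C * \<bar>p u - p v\<bar> powr \<alpha>"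
    unfolding X_def p_def using ab x_hoelder node_in_unit by auto
  have "(\<Sum>k<b-a. g k *v (X (Suc k) - X k)) = euler n b - euler n a"
    unfolding euler_diff_eq_sum[OF ab(1)] g_def X_def by simp
  moreover have "g 0 *v (X (b-a) - X 0) = f (euler n a) *v (x (node n b) - x (node n a))"
    "p (b-a) - p 0 = node n b - node n a"
    unfolding g_def X_def p_def using ab(1) by simp_all
  ultimately show ?thesis
    using young_loeve_matrix_sum_bound[OF alpha _ C_nonneg inc HG HX] L_nonneg Cy by simp
qed

lemma window_contraction:
  assumes "0 < T" "T \<le> 1 / real N"
  shows "real CARD('h) * L * C * Kconst (2*\<alpha>) * T powr \<alpha> \<le> 1/2"
proof -
  have "T powr \<alpha> \<le> (1 / real N) powr \<alpha>" using assms alpha_pos by (intro powr_mono2) auto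
  also have "\<dots> = 1 / real N powr \<alpha>" using N_pos by (simp add: powr_divide)
  finally have "real CARD('h) * L * C * Kconst (2*\<alpha>) * T powr \<alpha>
      \<le> real CARD('h) * L * C * Kconst (2*\<alpha>) * (1 / real N powr \<alpha>)"
    using L_nonneg C_nonneg K_nonneg by (intro mult_left_mono) auto
  also have "\<dots> \<le> 1/2" using N_large N_pos by (simp add: field_simps)
  finally show ?thesis .
qed

lemma euler_increment_le:
  assumes An: "0 \<le> An"
    and window: "\<And>u v. u \<le> steps n \<Longrightarrow> v \<le> steps n \<Longrightarrow> u - v \<le> 2^n \<Longrightarrow> v - u \<le> 2^n \<Longrightarrow>
      maxabs (euler n u - euler n v) \<le> An * \<bar>node n u - node n v\<bar> powr \<alpha>"
    and uv: "u < v" "v \<le> steps n" "v - u \<le> 2^n"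
  shows "maxabs (euler n v - euler n u)
    \<le> (real CARD('h) * F0 * C + An / 2) * (node n v - node n u) powr \<alpha>"
proof -
  define T where "T = node n v - node n u"
  have T0: "0 < T" unfolding T_def using node_less[OF uv(1)] by simp
  have small: "real CARD('h) * L * C * Kconst (2*\<alpha>) * T powr \<alpha> \<le> 1/2"
    using window_contraction T0 node_diff_le_window[of u v n] uv unfolding T_def by simp
  have rem: "maxabs (euler n v - euler n u - f (euler n u) *v (x (node n v) - x (node n u)))
      \<le> real CARD('h) * (L * An) * C * Kconst (2*\<alpha>) * T powr (2*\<alpha>)"
    unfolding T_def using uv An by (intro euler_remainder_le window) auto
  have "maxabs (x (node n v) - x (node n u)) \<le> C * \<bar>node n v - node n u\<bar> powr \<alpha>"
    using x_hoelder node_in_unit uv by auto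
  then have "maxabs (x (node n v) - x (node n u)) \<le> C * T powr \<alpha>"
    using T0 unfolding T_def by simp
  then have lin: "maxabs (f (euler n u) *v (x (node n v) - x (node n u)))
      \<le> real CARD('h) * F0 * (C * T powr \<alpha>)"
    using F0_nonneg by (intro order_trans[OF maxabs_f_mult_le] mult_left_mono) auto
  have "maxabs (euler n v - euler n u)
      \<le> real CARD('h) * F0 * (C * T powr \<alpha>)
        + real CARD('h) * (L * An) * C * Kconst (2*\<alpha>) * T powr (2*\<alpha>)"
    using maxabs_add_le[of "f (euler n u) *v (x (node n v) - x (node n u))"
        "euler n v - euler n u - f (euler n u) *v (x (node n v) - x (node n u))"] lin rem
    by simp
  also have "\<dots> = (real CARD('h) * F0 * C
      + An * (real CARD('h) * L * C * Kconst (2*\<alpha>) * T powr \<alpha>)) * T powr \<alpha>"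
    by (simp add: powr_add[symmetric] algebra_simps)
  also have "\<dots> \<le> (real CARD('h) * F0 * C + An / 2) * T powr \<alpha>"
    using mult_left_mono[OF small An] by (intro mult_right_mono) auto
  finally show ?thesis unfolding T_def .
qed

lemma euler_hoelder_window:
  assumes "u \<le> steps n" "v \<le> steps n" "u - v \<le> 2^n" "v - u \<le> 2^n"
  shows "maxabs (euler n u - euler n v) \<le> A * \<bar>node n u - node n v\<bar> powr \<alpha>"
proof -
  txt \<open>For the best Hoelder constant \<open>An\<close> of the scheme over windows of \<open>2\<^sup>n\<close> steps,
    the previous lemma gives \<open>An \<le> A/2 + An/2\<close>.\<close>
  define S where "S = {(u,v). u < v \<and> v \<le> steps n \<and> v - u \<le> 2^n}"
  define r where "r = (\<lambda>(u,v). maxabs (euler n v - euler n u) / (node n v - node n u) powr \<alpha>)"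
  have finS: "finite S"
    by (rule finite_subset[of _ "{..steps n} \<times> {..steps n}"]) (auto simp: S_def)
  have neS: "(0,1) \<in> S" unfolding S_def using steps_pos[of n] by simp
  define An where "An = Max (r ` S)"
  have r_le: "q \<in> S \<Longrightarrow> r q \<le> An" for q unfolding An_def using finS by (intro Max_ge) auto
  have "0 \<le> r (0,1)" unfolding r_def by (simp add: maxabs_nonneg)
  then have An_nonneg: "0 \<le> An" using r_le[OF neS] by linarith
  have ordered: "maxabs (euler n v - euler n u) \<le> An * (node n v - node n u) powr \<alpha>"
    if "(u,v) \<in> S" for u v
  proof -
    have "0 < (node n v - node n u) powr \<alpha>" using that node_less[of u v n] unfolding S_def by simp
    then show ?thesis using r_le[OF that] unfolding r_def by (simp add: divide_le_eq)
  qed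
  have window: "maxabs (euler n u - euler n v) \<le> An * \<bar>node n u - node n v\<bar> powr \<alpha>"
    if uv: "u \<le> steps n" "v \<le> steps n" "u - v \<le> 2^n" "v - u \<le> 2^n" for u v
  proof (cases u v rule: linorder_cases)
    case less
    then show ?thesis using ordered[of u v] node_less[OF less, of n] uv
      by (simp add: S_def maxabs_minus_commute)
  next
    case greater
    then show ?thesis using ordered[of v u] node_less[OF greater, of n] uv by (simp add: S_def)
  qed simp
  have "r q \<le> real CARD('h) * F0 * C + An / 2" if qS: "q \<in> S" for q
  proof -
    obtain u v where uv: "q = (u,v)" "u < v" "v \<le> steps n" "v - u \<le> 2^n"
      using qS unfolding S_def by (cases q) auto
    then have "0 < (node n v - node n u) powr \<alpha>" using node_less[of u v n] by simp
    then show ?thesis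
      using euler_increment_le[OF An_nonneg window uv(2-4)] unfolding uv r_def
      by (simp add: divide_le_eq)
  qed
  moreover have "An \<in> r ` S" unfolding An_def using finS neS by (intro Max_in) auto
  ultimately have "An \<le> real CARD('h) * F0 * C + An / 2" by blast
  then have "An \<le> A" unfolding A_def by simp
  then show ?thesis
    using order_trans[OF window[OF assms] mult_right_mono] by simp
qed

lemma euler_hoelder:
  assumes "a \<le> b" "b \<le> steps n" "b - a \<le> 2^n"
  shows "maxabs (euler n b - euler n a) \<le> A * (node n b - node n a) powr \<alpha>"
  using euler_hoelder_window[of b n a] assms node_mono[OF assms(1)] by simp

lemma euler_remainder:
  assumes ab: "a \<le> b" "b \<le> steps n" "b - a \<le> 2^n"
  shows "maxabs (euler n b - euler n a - f (euler n a) *v (x (node n b) - x (node n a)))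
    \<le> B * (node n b - node n a) powr (2*\<alpha>)"
proof -
  have "maxabs (euler n b - euler n a - f (euler n a) *v (x (node n b) - x (node n a)))
      \<le> real CARD('h) * (L * A) * C * Kconst (2*\<alpha>) * (node n b - node n a) powr (2*\<alpha>)"
    using ab A_nonneg by (intro euler_remainder_le euler_hoelder_window) auto
  then show ?thesis by (simp add: B_def ac_simps)
qed

lemma euler_bounded:
  assumes "k \<le> steps n"
  shows "maxabs (euler n k - y0) \<le> A * (real N + 1)"
proof -
  have "maxabs (euler n k - y0) \<le> A * (real (k div 2^n) + 1)"
    using assms
  proof (induction k rule: less_induct)
    case (less k)
    show ?case
    proof (cases "k < 2^n")
      case True
      have "maxabs (euler n k - euler n 0) \<le> A * (node n k - node n 0) powr \<alpha>"
        using True less.prems by (intro euler_hoelder) auto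
      also have "\<dots> \<le> A" using A_nonneg node_diff_powr_le_1[of 0 k n] less.prems
        by (simp add: mult_left_le)
      finally show ?thesis using True by simp
    next
      case False
      define j where "j = k - 2^n"
      have p2: "0 < (2::nat)^n" by simp
      then have "0 < k" using False by linarith
      then have jk: "j < k" "j \<le> steps n"
        using diff_less[OF p2] less.prems unfolding j_def by auto
      have "maxabs (euler n k - euler n j) \<le> A * (node n k - node n j) powr \<alpha>"
        using False less.prems unfolding j_def by (intro euler_hoelder) auto
      also have "\<dots> \<le> A" using A_nonneg node_diff_powr_le_1[of j k n] less.prems jk
        by (simp add: mult_left_le)
      finally have "maxabs (euler n k - euler n j) \<le> A" .
      moreover have "k div 2^n = Suc (j div 2^n)"
        unfolding j_def using False by (simp add: le_div_geq)
      ultimately show ?thesis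
        using less.IH[OF jk] maxabs_add_le[of "euler n k - euler n j" "euler n j - y0"]
        by (simp add: algebra_simps)
    qed
  qed
  moreover have "k div 2^n \<le> N"
    using div_le_mono[OF assms[unfolded steps_def], of "2^n"] by simp
  then have "A * (real (k div 2^n) + 1) \<le> A * (real N + 1)"
    using A_nonneg by (intro mult_left_mono) auto
  ultimately show ?thesis by linarith
qed

section \<open>The limit of the Euler schemes\<close>

definition euler_path :: "nat \<Rightarrow> real \<Rightarrow> real ^ 'd" where
  "euler_path n t = euler n (min (steps n) (nat \<lfloor>t * real (steps n)\<rfloor>))"

lemma floor_steps_le: "t \<in> {0..1} \<Longrightarrow> nat \<lfloor>t * real (steps n)\<rfloor> \<le> steps n"
proof -
  assume "t \<in> {0..1}"
  then have "t * real (steps n) \<le> real (steps n)" by (simp add: mult_left_le_one_le)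
  then have "nat \<lfloor>t * real (steps n)\<rfloor> \<le> nat \<lfloor>real (steps n)\<rfloor>" by (intro nat_mono floor_mono)
  then show ?thesis by simp
qed

lemma euler_path_eq: "t \<in> {0..1} \<Longrightarrow> euler_path n t = euler n (nat \<lfloor>t * real (steps n)\<rfloor>)"
  unfolding euler_path_def using floor_steps_le by (simp add: min_absorb2)

lemma euler_path_in_cball: "euler_path n t \<in> cball y0 (real CARD('d) * (A * (real N + 1)))"
proof -
  have "norm (euler_path n t - y0) \<le> real CARD('d) * maxabs (euler_path n t - y0)"
    by (rule norm_le_card_maxabs)
  also have "\<dots> \<le> real CARD('d) * (A * (real N + 1))"
    unfolding euler_path_def by (intro mult_left_mono euler_bounded) auto
  finally show ?thesis by (simp add: dist_norm norm_minus_commute)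
qed

lemma steps_shift: "n0 \<le> n \<Longrightarrow> real (steps n) = real (steps n0) * 2^(n - n0)"
  unfolding steps_def by (simp add: power_add[symmetric])

lemma floor_node_close:
  assumes t: "t \<in> {0..1}" and n: "n0 \<le> n"
  defines "k0 \<equiv> nat \<lfloor>t * real (steps n0)\<rfloor>"
  defines "a \<equiv> k0 * 2^(n - n0)" and "b \<equiv> nat \<lfloor>t * real (steps n)\<rfloor>"
  shows "a \<le> b" "b \<le> steps n" "b - a \<le> 2^n" "node n b - node n a \<le> 1 / 2^n0"
    "node n a = real k0 / real (steps n0)"
proof -
  define u where "u = t * real (steps n0)"
  have u0: "0 \<le> u" unfolding u_def using t by simp
  have e: "t * real (steps n) = u * 2^(n - n0)" unfolding u_def using steps_shift[OF n] by simp
  have k0u: "real k0 \<le> u" "u < real k0 + 1"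
    unfolding k0_def u_def[symmetric] using nat_floor_bounds[OF u0] by auto
  have ra: "real a = real k0 * 2^(n - n0)" unfolding a_def by simp
  have "real a \<le> t * real (steps n)" unfolding ra e using k0u by (intro mult_right_mono) auto
  then show "a \<le> b" unfolding b_def by (rule le_nat_floor)
  show "b \<le> steps n" unfolding b_def by (rule floor_steps_le[OF t])
  have "real b \<le> t * real (steps n)" unfolding b_def using nat_floor_bounds(1) t by simp
  also have "\<dots> < real a + 2^(n - n0)"
    using mult_strict_right_mono[OF k0u(2), of "2^(n - n0)"] unfolding e ra by (simp add: algebra_simps)
  finally have bl: "real b < real a + 2^(n - n0)" .
  then have "real b < real (a + 2^(n - n0))" by simp
  then have "b < a + 2^(n - n0)" by (simp only: of_nat_less_iff)
  moreover have "(2::nat)^(n - n0) \<le> 2^n" by (rule power_increasing) auto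
  ultimately show "b - a \<le> 2^n" by linarith
  have "node n b - node n a = (real b - real a) / real (steps n)"
    unfolding node_def by (simp add: diff_divide_distrib)
  also have "\<dots> \<le> 2^(n - n0) / real (steps n)" using bl steps_pos[of n] by (intro divide_right_mono) auto
  also have "\<dots> = 1 / real (steps n0)" unfolding steps_shift[OF n] using steps_pos[of n0] by simp
  also have "\<dots> \<le> 1 / 2^n0"
    using steps_ge[of n0] steps_pos[of n0] by (intro divide_left_mono) (auto simp flip: of_nat_le_iff)
  finally show "node n b - node n a \<le> 1 / 2^n0" .
  show "node n a = real k0 / real (steps n0)" unfolding node_def ra steps_shift[OF n] by simp
qed

definition grid_point :: "nat \<Rightarrow> real" where
  "grid_point m = (case prod_decode m of (n, k) \<Rightarrow> real k / real (steps n))"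

lemma grid_point_prod_encode: "grid_point (prod_encode (n, k)) = real k / real (steps n)"
  unfolding grid_point_def by simp

lemma exists_subseq_convergent_on_grid:
  "\<exists>r. strict_mono r \<and> (\<forall>m. convergent (\<lambda>j. euler_path (r j) (grid_point m)))"
proof -
  let ?P = "\<lambda>m s. convergent (\<lambda>j. euler_path (s j) (grid_point m))"
  interpret sq: subseqs ?P
  proof (unfold subseqs_def, intro allI impI)
    fix m and s :: "nat \<Rightarrow> nat" assume "strict_mono s"
    have "\<forall>j. euler_path (s j) (grid_point m) \<in> cball y0 (real CARD('d) * (A * (real N + 1)))"
      using euler_path_in_cball by blast
    then obtain l r where "strict_mono (r::nat\<Rightarrow>nat)" "((\<lambda>j. euler_path (s j) (grid_point m)) \<circ> r) \<longlonglongrightarrow> l"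
      using compact_imp_seq_compact[OF compact_cball] seq_compactE by metis
    then show "\<exists>r'. strict_mono r' \<and> convergent (\<lambda>j. euler_path ((s \<circ> r') j) (grid_point m))"
      by (auto simp: convergent_def comp_def)
  qed
  have "convergent (\<lambda>j. euler_path (sq.diagseq j) (grid_point m))" for m
  proof -
    have "?P m (sq.diagseq \<circ> ((+) (Suc m)))"
      by (rule sq.diagseq_holds) (auto dest: convergent_subseq_convergent simp: comp_def)
    then have "convergent (\<lambda>j. euler_path (sq.diagseq (j + Suc m)) (grid_point m))"
      by (simp add: add.commute comp_def)
    then show ?thesis by (subst (asm) convergent_ignore_initial_segment)
  qed
  then show ?thesis using sq.subseq_diagseq by blast
qed

lemma euler_path_near_grid_point:
  assumes t: "t \<in> {0..1}" and n: "n0 \<le> n"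
  defines "q \<equiv> real (nat \<lfloor>t * real (steps n0)\<rfloor>) / real (steps n0)"
  shows "dist (euler_path n t) (euler_path n q) \<le> real CARD('d) * A * (1 / 2^n0) powr \<alpha>"
proof -
  define a where "a = nat \<lfloor>t * real (steps n0)\<rfloor> * 2^(n - n0)"
  define b where "b = nat \<lfloor>t * real (steps n)\<rfloor>"
  note close = floor_node_close[OF t n, folded a_def b_def q_def]
  have q01: "q \<in> {0..1}" using close(5) node_in_unit[of a n] close(1,2) by simp
  have "q * real (steps n) = real a" using close(5) steps_pos[of n] unfolding node_def by (simp add: field_simps)
  then have "euler_path n q = euler n a" unfolding euler_path_eq[OF q01] by simp
  moreover have "euler_path n t = euler n b" unfolding euler_path_eq[OF t] b_def ..
  ultimately have "dist (euler_path n t) (euler_path n q) \<le> real CARD('d) * maxabs (euler n b - euler n a)"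
    using norm_le_card_maxabs by (simp add: dist_norm)
  also have "\<dots> \<le> real CARD('d) * (A * (node n b - node n a) powr \<alpha>)"
    using close by (intro mult_left_mono euler_hoelder) auto
  also have "\<dots> \<le> real CARD('d) * (A * (1 / 2^n0) powr \<alpha>)"
    using close A_nonneg node_mono[OF close(1), of n] alpha_pos
    by (intro mult_left_mono powr_mono2) auto
  finally show ?thesis by (simp add: mult.assoc)
qed

text \<open>Equicontinuity upgrades convergence on the dense set of grid points to convergence everywhere.\<close>

lemma euler_path_convergent:
  assumes r: "strict_mono r" and grid: "\<forall>m. convergent (\<lambda>j. euler_path (r j) (grid_point m))"
    and t: "t \<in> {0..1}"
  shows "convergent (\<lambda>j. euler_path (r j) t)"
proof (rule Cauchy_convergent_iff[THEN iffD1], rule metric_CauchyI)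
  fix \<epsilon> :: real assume \<epsilon>: "0 < \<epsilon>"
  define c where "c = real CARD('d) * A"
  have c0: "0 \<le> c" unfolding c_def using A_nonneg by simp
  have "(\<lambda>n. c * (1 / 2^n) powr \<alpha>) \<longlonglongrightarrow> c * 0"
    using alpha_pos by (intro tendsto_intros tendsto_zero_powrI LIMSEQ_divide_realpow_zero) auto
  then obtain n0 where "norm (c * (1 / 2^n0) powr \<alpha> - c * 0) < \<epsilon> / 3"
    using LIMSEQ_D[of _ "c * 0" "\<epsilon> / 3"] \<epsilon> by fastforce
  then have n0: "c * (1 / 2^n0) powr \<alpha> < \<epsilon> / 3" using c0 by simp
  define q where "q = real (nat \<lfloor>t * real (steps n0)\<rfloor>) / real (steps n0)"
  have close: "dist (euler_path n t) (euler_path n q) < \<epsilon> / 3" if "n0 \<le> n" for n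
    using euler_path_near_grid_point[OF t that] n0 unfolding q_def c_def by simp
  have "q = grid_point (prod_encode (n0, nat \<lfloor>t * real (steps n0)\<rfloor>))"
    unfolding q_def grid_point_prod_encode ..
  then have "Cauchy (\<lambda>j. euler_path (r j) q)" using grid by (simp add: Cauchy_convergent_iff)
  then obtain J where J: "\<forall>i\<ge>J. \<forall>j\<ge>J. dist (euler_path (r i) q) (euler_path (r j) q) < \<epsilon> / 3"
    using metric_CauchyD[of _ "\<epsilon> / 3"] \<epsilon> by (metis zero_less_divide_iff zero_less_numeral)
  show "\<exists>J. \<forall>i\<ge>J. \<forall>j\<ge>J. dist (euler_path (r i) t) (euler_path (r j) t) < \<epsilon>"
  proof (intro exI allI impI)
    fix i j assume i: "max n0 J \<le> i" and j: "max n0 J \<le> j"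
    have "n0 \<le> r i" "n0 \<le> r j" using i j seq_suble[OF r, of i] seq_suble[OF r, of j] by auto
    then have "dist (euler_path (r i) t) (euler_path (r i) q) < \<epsilon> / 3"
      "dist (euler_path (r j) q) (euler_path (r j) t) < \<epsilon> / 3"
      using close by (auto simp: dist_commute)
    moreover have "dist (euler_path (r i) q) (euler_path (r j) q) < \<epsilon> / 3" using J i j by simp
    ultimately show "dist (euler_path (r i) t) (euler_path (r j) t) < \<epsilon>"
      using dist_triangle[of "euler_path (r i) t" "euler_path (r j) t" "euler_path (r i) q"]
        dist_triangle[of "euler_path (r i) q" "euler_path (r j) t" "euler_path (r j) q"]
      by linarith
  qed
qed

lemma node_floor_tendsto:
  assumes s: "s \<in> {0..1}"
  shows "(\<lambda>n. node n (nat \<lfloor>s * real (steps n)\<rfloor>)) \<longlonglongrightarrow> s"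
proof -
  have "norm (node n (nat \<lfloor>s * real (steps n)\<rfloor>) - s) \<le> (1/2)^n" for n
  proof -
    have Mp: "0 < real (steps n)" using steps_pos[of n] by simp
    have u0: "0 \<le> s * real (steps n)" using s by simp
    have "\<bar>real (nat \<lfloor>s * real (steps n)\<rfloor>) - s * real (steps n)\<bar> \<le> 1"
      using nat_floor_bounds[OF u0] by linarith
    moreover have "node n (nat \<lfloor>s * real (steps n)\<rfloor>) - s
        = (real (nat \<lfloor>s * real (steps n)\<rfloor>) - s * real (steps n)) / real (steps n)"
      using Mp by (simp add: node_def diff_divide_distrib)
    ultimately have "\<bar>node n (nat \<lfloor>s * real (steps n)\<rfloor>) - s\<bar> \<le> 1 / real (steps n)"
      using Mp by (simp add: abs_divide divide_right_mono)
    also have "\<dots> \<le> 1 / 2^n"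
      using steps_ge[of n] Mp by (intro divide_left_mono) (auto simp flip: of_nat_le_iff)
    finally show ?thesis by (simp add: power_one_over)
  qed
  then have "(\<lambda>n. node n (nat \<lfloor>s * real (steps n)\<rfloor>) - s) \<longlonglongrightarrow> 0"
    by (rule Lim_null_comparison[OF always_eventually[OF allI]]) (intro LIMSEQ_power_zero, simp)
  then show ?thesis by (simp add: LIM_zero_iff)
qed

lemma floor_window:
  fixes n :: nat
  assumes s: "s \<in> {0..1}" and t: "t \<in> {0..1}" and st: "s \<le> t" and short: "t - s \<le> 1 / real N"
  defines "a \<equiv> nat \<lfloor>s * real (steps n)\<rfloor>" and "b \<equiv> nat \<lfloor>t * real (steps n)\<rfloor>"
  shows "a \<le> b" "b \<le> steps n" "b - a \<le> 2^n"
proof -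
  show "a \<le> b" unfolding a_def b_def using st by (intro nat_mono floor_mono mult_right_mono) auto
  show "b \<le> steps n" unfolding b_def by (rule floor_steps_le[OF t])
  have "(t - s) * real N \<le> 1" using short N_pos by (simp add: field_simps)
  then have "(t - s) * real N * 2^n \<le> 2^n" by simp
  then have "t * real (steps n) \<le> s * real (steps n) + 2^n"
    unfolding steps_def by (simp add: algebra_simps)
  moreover have "real b \<le> t * real (steps n)" unfolding b_def using nat_floor_bounds(1) t by simp
  moreover have "s * real (steps n) < real a + 1" unfolding a_def using nat_floor_bounds(2) s by simp
  ultimately have "real b < real (a + 1 + 2^n)" by simp
  then have "b < a + 1 + 2^n" by (simp only: of_nat_less_iff)
  then show "b - a \<le> 2^n" by linarith
qed

lemma local_bounds_of_limit:
  assumes r: "strict_mono r"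
    and y_lim: "\<And>t. t \<in> {0..1} \<Longrightarrow> (\<lambda>j. euler_path (r j) t) \<longlonglongrightarrow> y t"
    and s: "s \<in> {0..1}" and t: "t \<in> {0..1}" and st: "s \<le> t" and short: "t - s \<le> 1 / real N"
  shows "maxabs (y t - y s) \<le> A * (t - s) powr \<alpha> \<and>
    maxabs (y t - y s - f (y s) *v (x t - x s)) \<le> B * (t - s) powr (2*\<alpha>)"
proof -
  define a where "a n = nat \<lfloor>s * real (steps n)\<rfloor>" for n
  define b where "b n = nat \<lfloor>t * real (steps n)\<rfloor>" for n
  have ab: "a n \<le> b n" "b n \<le> steps n" "b n - a n \<le> 2^n" for n
    unfolding a_def b_def using floor_window[OF s t st short] by auto
  define Ta where "Ta j = node (r j) (a (r j))" for j
  define Tb where "Tb j = node (r j) (b (r j))" for j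
  have Ta_lim: "Ta \<longlonglongrightarrow> s" and Tb_lim: "Tb \<longlonglongrightarrow> t"
    using LIMSEQ_subseq_LIMSEQ[OF node_floor_tendsto[OF s] r]
      LIMSEQ_subseq_LIMSEQ[OF node_floor_tendsto[OF t] r]
    unfolding Ta_def Tb_def a_def b_def comp_def by auto
  have Ta01: "Ta j \<in> {0..1}" for j
    unfolding Ta_def using ab(1,2)[of "r j"] by (intro node_in_unit) linarith
  have Tb01: "Tb j \<in> {0..1}" for j
    unfolding Tb_def using ab(2) by (intro node_in_unit)
  have Tab: "0 \<le> Tb j - Ta j" for j unfolding Ta_def Tb_def using node_mono[OF ab(1)] by simp
  have path_s: "euler_path (r j) s = euler (r j) (a (r j))"
    and path_t: "euler_path (r j) t = euler (r j) (b (r j))" for j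
    unfolding euler_path_eq[OF s] euler_path_eq[OF t] a_def b_def by simp_all
  have "(\<lambda>j. Tb j - Ta j) \<longlonglongrightarrow> t - s" by (intro tendsto_diff Tb_lim Ta_lim)
  then have W1: "(\<lambda>j. A * (Tb j - Ta j) powr \<alpha>) \<longlonglongrightarrow> A * (t - s) powr \<alpha>"
    and W2: "(\<lambda>j. B * (Tb j - Ta j) powr (2*\<alpha>)) \<longlonglongrightarrow> B * (t - s) powr (2*\<alpha>)"
    using Tab alpha_pos by (auto intro!: tendsto_mult tendsto_const tendsto_powr')
  have U1: "(\<lambda>j. euler_path (r j) t - euler_path (r j) s) \<longlonglongrightarrow> y t - y s"
    by (intro tendsto_diff y_lim s t)
  have U2: "(\<lambda>j. euler_path (r j) t - euler_path (r j) s - f (euler_path (r j) s) *v (x (Tb j) - x (Ta j)))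
      \<longlonglongrightarrow> y t - y s - f (y s) *v (x t - x s)"
    using alpha_pos
    by (intro tendsto_diff lipschitz_matrix_vector_mult_tendsto[OF f_lipschitz] y_lim s t
        hoelder_tendsto[OF x_hoelder] Tb01 Ta01 Tb_lim Ta_lim)
  have "maxabs (euler_path (r j) t - euler_path (r j) s) \<le> A * (Tb j - Ta j) powr \<alpha>" for j
    unfolding path_s path_t Ta_def Tb_def using ab by (intro euler_hoelder)
  moreover have "maxabs (euler_path (r j) t - euler_path (r j) s
      - f (euler_path (r j) s) *v (x (Tb j) - x (Ta j))) \<le> B * (Tb j - Ta j) powr (2*\<alpha>)" for j
    unfolding path_s path_t Ta_def Tb_def using ab by (intro euler_remainder)
  ultimately show ?thesis using maxabs_le_limit[OF U1 W1] maxabs_le_limit[OF U2 W2] by simp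
qed

lemma exists_local_solution:
  "\<exists>y. y 0 = y0 \<and> (\<forall>s t. s \<in> {0..1} \<longrightarrow> t \<in> {0..1} \<longrightarrow> s \<le> t \<longrightarrow> t - s \<le> 1 / real N \<longrightarrow>
      maxabs (y t - y s) \<le> A * (t - s) powr \<alpha> \<and>
      maxabs (y t - y s - f (y s) *v (x t - x s)) \<le> B * (t - s) powr (2*\<alpha>))"
proof -
  obtain r where r: "strict_mono r" and grid: "\<forall>m. convergent (\<lambda>j. euler_path (r j) (grid_point m))"
    using exists_subseq_convergent_on_grid by blast
  define y where "y t = lim (\<lambda>j. euler_path (r j) t)" for t
  have y_lim: "(\<lambda>j. euler_path (r j) t) \<longlonglongrightarrow> y t" if "t \<in> {0..1}" for t
    unfolding y_def using euler_path_convergent[OF r grid that] by (simp add: convergent_LIMSEQ_iff)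
  have "(\<lambda>j. euler_path (r j) 0) \<longlonglongrightarrow> y0" using euler_path_eq[of 0] by simp
  then have "y 0 = y0" using y_lim[of 0] LIMSEQ_unique by auto
  then show ?thesis using local_bounds_of_limit[OF r y_lim] by blast
qed

lemma exists_young_solution:
  defines "G1 \<equiv> A * real N powr (1 - \<alpha>)"
  shows "\<exists>y. (\<forall>t\<in>{0..1}. has_young_integral (\<lambda>s. f (y s)) x 0 t (y t - y0)) \<and>
     (\<forall>s t. 0 \<le> s \<and> s < t \<and> t \<le> 1 \<longrightarrow>
        maxabs (y s - y t) \<le> G1 * \<bar>s - t\<bar> powr \<alpha> \<and>
        maxabs (y t - y s - f (y s) *v (x t - x s))
          \<le> real CARD('h) * (L * G1) * C * Kconst (2*\<alpha>) * \<bar>s - t\<bar> powr (2 * \<alpha>))"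
proof -
  obtain y where y0: "y 0 = y0" and loc: "\<And>s t. s \<in> {0..1} \<Longrightarrow> t \<in> {0..1} \<Longrightarrow> s \<le> t \<Longrightarrow>
      t - s \<le> 1 / real N \<Longrightarrow> maxabs (y t - y s) \<le> A * (t - s) powr \<alpha> \<and>
      maxabs (y t - y s - f (y s) *v (x t - x s)) \<le> B * (t - s) powr (2*\<alpha>)"
    using exists_local_solution by blast
  have G1: "0 \<le> G1" unfolding G1_def using A_nonneg by simp
  have ordered: "maxabs (y t - y s) \<le> G1 * (t - s) powr \<alpha>"
    if "s \<in> {0..1}" "t \<in> {0..1}" "s \<le> t" for s t
    unfolding G1_def by (rule hoelder_of_local_hoelder[OF _ N_pos that]) (use loc in blast)
  have hoelder: "maxabs (y u - y v) \<le> G1 * \<bar>u - v\<bar> powr \<alpha>" if "u \<in> {0..1}" "v \<in> {0..1}" for u v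
    using ordered[of u v] ordered[of v u] that
    by (cases "v \<le> u") (auto simp: maxabs_minus_commute abs_minus_commute)
  have remainder: "maxabs (y t - y s - f (y s) *v (x t - x s))
      \<le> real CARD('h) * (L * G1) * C * Kconst (2*\<alpha>) * (t - s) powr (2*\<alpha>)"
    if "s \<in> {0..1}" "t \<in> {0..1}" "s < t" for s t
    using remainder_bound_of_local[OF alpha C_nonneg L_nonneg G1 x_hoelder f_lipschitz hoelder _
        N_pos that] loc by blast
  have "has_young_integral (\<lambda>s. f (y s)) x 0 t (y t - y0)" if "t \<in> {0..1}" for t
    using has_young_integral_of_remainder_bound[OF remainder _ alpha that] y0
      C_nonneg L_nonneg G1 K_nonneg by simp
  moreover have "maxabs (y s - y t) \<le> G1 * \<bar>s - t\<bar> powr \<alpha>" if "0 \<le> s" "t \<le> 1" "s < t" for s t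
    using hoelder[of s t] that by simp
  ultimately show ?thesis using remainder by (intro exI[of _ y]) (auto simp: abs_minus_commute)
qed

end

lemma le_ceiling_root_powr:
  assumes "0 \<le> Q" "0 < \<alpha>"
  shows "Q \<le> real (max 1 (nat \<lceil>Q powr (1 / \<alpha>)\<rceil>)) powr \<alpha>"
proof -
  have "Q powr (1 / \<alpha>) \<le> real (nat \<lceil>Q powr (1 / \<alpha>)\<rceil>)" by (rule real_nat_ceiling_ge)
  also have "\<dots> \<le> real (max 1 (nat \<lceil>Q powr (1 / \<alpha>)\<rceil>))" by simp
  finally have "(Q powr (1 / \<alpha>)) powr \<alpha> \<le> real (max 1 (nat \<lceil>Q powr (1 / \<alpha>)\<rceil>)) powr \<alpha>"
    using assms by (intro powr_mono2) auto
  then show ?thesis using assms by (simp add: powr_powr)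
qed

theorem lemma9:
  fixes x :: "real \<Rightarrow> real ^ 'h"
    and f :: "real ^ 'd \<Rightarrow> real ^ 'h ^ 'd"
    and Df :: "'d \<Rightarrow> 'h \<Rightarrow> real ^ 'd \<Rightarrow> real ^ 'd"
    and D2f :: "'d \<Rightarrow> 'h \<Rightarrow> real ^ 'd \<Rightarrow> real ^ 'd ^ 'd"
    and y0 :: "real ^ 'd"
    and \<alpha> C\<^sub>\<alpha> :: real
  assumes alpha: "1/2 < \<alpha>" "\<alpha> \<le> 1"
    and Cpos: "0 < C\<^sub>\<alpha>"
    and holder: "\<forall>s\<in>{0..1}. \<forall>t\<in>{0..1}. maxabs (x t - x s) \<le> C\<^sub>\<alpha> * \<bar>t - s\<bar> powr \<alpha>"
    and D1: "\<forall>i j z. ((\<lambda>w. f w $ i $ j) has_derivative (\<lambda>v. Df i j z \<bullet> v)) (at z)"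
    and D2: "\<forall>i j z. (Df i j has_derivative (\<lambda>v. D2f i j z *v v)) (at z)"
    and D2cont: "\<forall>i j. continuous_on UNIV (D2f i j)"
    and bdd0: "bdd_above {\<bar>f z $ i $ j\<bar> | z i j. True}"
    and bdd1: "bdd_above {\<bar>Df i j z $ k\<bar> | z i j k. True}"
    and bdd2: "bdd_above {\<bar>D2f i j z $ k $ l\<bar> | z i j k l. True}"
  shows "let d = real CARD('d); h = real CARD('h);
             F0 = Sup {\<bar>f z $ i $ j\<bar> | z i j. True};
             F1 = Sup {\<bar>Df i j z $ k\<bar> | z i j k. True};
             K = Kconst (2 * \<alpha>);
             N = max 1 (nat \<lceil>(2 * d * h * C\<^sub>\<alpha> * K * F1) powr (1 / \<alpha>)\<rceil>);
             G1 = 2 * h * real N powr (1 - \<alpha>) * F0 * C\<^sub>\<alpha>;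
             G2 = d * h * K * F1 * C\<^sub>\<alpha> * G1
         in \<exists>y :: real \<Rightarrow> real ^ 'd.
              (\<forall>t\<in>{0..1}. has_young_integral (\<lambda>s. f (y s)) x 0 t (y t - y0)) \<and>
              (\<forall>s t. 0 \<le> s \<and> s < t \<and> t \<le> 1 \<longrightarrow>
                 maxabs (y s - y t) \<le> G1 * \<bar>s - t\<bar> powr \<alpha> \<and>
                 maxabs (y t - y s - f (y s) *v (x t - x s)) \<le> G2 * \<bar>s - t\<bar> powr (2 * \<alpha>))"
proof -
  define F0 where "F0 = Sup {\<bar>f z $ i $ j\<bar> | z i j. True}"
  define F1 where "F1 = Sup {\<bar>Df i j z $ k\<bar> | z i j k. True}"
  define N where "N = max 1 (nat \<lceil>(2 * real CARD('d) * real CARD('h) * C\<^sub>\<alpha> * Kconst (2*\<alpha>) * F1)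
    powr (1 / \<alpha>)\<rceil>)"
  have F0: "\<bar>f z $ i $ j\<bar> \<le> F0" for z i j unfolding F0_def by (rule cSup_upper[OF _ bdd0]) blast
  have F1: "\<bar>Df i j z $ k\<bar> \<le> F1" for z i j k unfolding F1_def by (rule cSup_upper[OF _ bdd1]) blast
  have F1_nonneg: "0 \<le> F1" using F1 by (meson abs_ge_zero order_trans)
  have lip: "\<bar>f z $ i $ j - f w $ i $ j\<bar> \<le> (real CARD('d) * F1) * maxabs (z - w)" for z w i j
    using lipschitz_of_bounded_gradient[of "\<lambda>w. f w $ i $ j" "Df i j"] D1 F1 by simp
  have "2 * real CARD('h) * C\<^sub>\<alpha> * Kconst (2*\<alpha>) * (real CARD('d) * F1) \<le> real N powr \<alpha>"
    unfolding N_def using le_ceiling_root_powr Kconst_nonneg[of "2*\<alpha>"] alpha Cpos F1_nonneg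
    by (simp add: ac_simps)
  then interpret euler_scheme x f y0 \<alpha> C\<^sub>\<alpha> F0 "real CARD('d) * F1" N
    using alpha Cpos holder F0 lip F1_nonneg unfolding N_def
    by unfold_locales auto
  show ?thesis
    using exists_young_solution unfolding Let_def A_def
      F0_def[symmetric] F1_def[symmetric] N_def[symmetric] by (simp add: ac_simps)
qed

end
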